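(* For every integer $N\ge 2$, every $\delta<0$, every $\beta>0$ and every $\theta\ge 0$, and for $E\in\{E_r,E_p\}$, $$\frac{N^2\theta}{2}\Big(H_N+\frac{1}{N-1}\Big)\le E(\theta)\le N(N-1)\,\theta\,\big(H_N+1\big).$$
   Context: Fix an integer $N\ge 2$, a real number $\delta<0$, and $\beta>0$. For $\theta\in\mathbb{R}$ put $x=\beta(\theta+\delta)$. For $1\le i\le N-1$ define $u_{i,i+1}=\frac{i(N-i)}{N^2}(1+e^{-x})^{-1}$, $u_{i,i-1}=\frac{i(N-i)}{N^2}(1+e^{x})^{-1}$, $u_{i,i}=1-u_{i,i+1}-u_{i,i-1}$, and $u_{i,j}=0$ for $|i-j|\ge 2$. Let $U=(u_{ij})_{i,j=1}^{N-1}$ and $\mathcal{N}=(n_{ij})_{i,j=1}^{N-1}=(I-U)^{-1}$. Define $E_r(\theta)=\frac{\theta}{2}\sum_{i=1}^{N-1}(n_{1i}+n_{N-1,i})\,i$ and $E_p(\theta)=\frac{\theta}{2}\sum_{i=1}^{N-1}(n_{1i}+n_{N-1,i})\,(N-i)$. The harmonic number is defined here as $H_N=\sum_{j=1}^{N-1}\frac1j$ (note the sum stops at $N-1$). *)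

theory Defs
  imports Complex_Main "Jordan_Normal_Form.Gauss_Jordan_Elimination"
begin

definition u_ent :: "nat \<Rightarrow> real \<Rightarrow> real \<Rightarrow> real \<Rightarrow> nat \<Rightarrow> nat \<Rightarrow> real" where
  "u_ent N \<delta> \<beta> \<theta> i j =
     (let x = \<beta> * (\<theta> + \<delta>);
          c = real (i * (N - i)) / (real N)^2;
          up = c * inverse (1 + exp (-x));
          down = c * inverse (1 + exp x)
      in if j = i + 1 then up
         else if j + 1 = i then down
         else if j = i then 1 - up - down
         else 0)"

(* U as an (N-1)x(N-1) matrix; JNF indices are 0-based, entry (i,j) holds u_{i+1,j+1} *)
definition U_mat :: "nat \<Rightarrow> real \<Rightarrow> real \<Rightarrow> real \<Rightarrow> real mat" where
  "U_mat N \<delta> \<beta> \<theta> = mat (N - 1) (N - 1) (\<lambda>(i, j). u_ent N \<delta> \<beta> \<theta> (i + 1) (j + 1))"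

definition fund_mat :: "nat \<Rightarrow> real \<Rightarrow> real \<Rightarrow> real \<Rightarrow> real mat" where
  "fund_mat N \<delta> \<beta> \<theta> = the (mat_inverse (1\<^sub>m (N - 1) - U_mat N \<delta> \<beta> \<theta>))"

definition n_ent :: "nat \<Rightarrow> real \<Rightarrow> real \<Rightarrow> real \<Rightarrow> nat \<Rightarrow> nat \<Rightarrow> real" where
  "n_ent N \<delta> \<beta> \<theta> i j = fund_mat N \<delta> \<beta> \<theta> $$ (i - 1, j - 1)"

definition E_r :: "nat \<Rightarrow> real \<Rightarrow> real \<Rightarrow> real \<Rightarrow> real" where
  "E_r N \<delta> \<beta> \<theta> = \<theta> / 2 * (\<Sum>i = 1..N - 1.
      (n_ent N \<delta> \<beta> \<theta> 1 i + n_ent N \<delta> \<beta> \<theta> (N - 1) i) * real i)"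

definition E_p :: "nat \<Rightarrow> real \<Rightarrow> real \<Rightarrow> real \<Rightarrow> real" where
  "E_p N \<delta> \<beta> \<theta> = \<theta> / 2 * (\<Sum>i = 1..N - 1.
      (n_ent N \<delta> \<beta> \<theta> 1 i + n_ent N \<delta> \<beta> \<theta> (N - 1) i) * (real N - real i))"

definition H :: "nat \<Rightarrow> real" where
  "H N = (\<Sum>j = 1..N - 1. 1 / real j)"

end

theory Submission
  imports Defs "Jordan_Normal_Form.Determinant"
begin

(* With the logistic probabilities p, q (p + q = 1) and c_i = i (N - i) / N^2, the matrix I - U is
   diag(c_i) times the tridiagonal matrix with 1 on the diagonal, -p above and -q below it.  Its
   inverse is the Green's function of the walk absorbed at 0 and N, expressed through
   h_n = p^(n-1) + p^(n-2) q + ... + q^(n-1):  n_Ki = h_min(K,i) h_(N-max(K,i)) r^|K-i| / (h_N c_i)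
   with r = p for K <= i and r = q otherwise.  For K = 1 and K = N - 1 the two rows add up to
   N^2 (h_(N-1) + p^(i-1) q^(N-1-i)) / (h_N i (N - i)), so E_r and E_p are sums of these terms
   against weights 1/(N - i) resp. 1/i, which lie in [1/(N-1), 1] and add up to H_N.  Since the
   monomials add up to h_(N-1) and h_N <= h_(N-1) <= 2 (N - 1) h_N / N, both bounds follow; only
   p, q > 0 is used. *)

definition hsum :: "real \<Rightarrow> real \<Rightarrow> nat \<Rightarrow> real" where
  "hsum p q n = (\<Sum>k<n. p ^ k * q ^ (n - 1 - k))"

lemma hsum_0 [simp]: "hsum p q 0 = 0"
  by (simp add: hsum_def)

lemma hsum_1 [simp]: "hsum p q (Suc 0) = 1"
  by (simp add: hsum_def)

lemma hsum_Suc: "hsum p q (Suc n) = q * hsum p q n + p ^ n"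
proof -
  have "(\<Sum>k<n. p ^ k * q ^ (n - k)) = q * hsum p q n"
    unfolding hsum_def sum_distrib_left
    by (rule sum.cong) (auto simp: Suc_diff_Suc simp flip: power_Suc)
  then show ?thesis
    by (simp add: hsum_def)
qed

lemma hsum_add: "hsum p q (m + n) = p ^ m * hsum p q n + q ^ n * hsum p q m"
  by (induction n) (simp_all add: hsum_Suc power_add algebra_simps)

lemma hsum_Suc': "hsum p q (Suc n) = p * hsum p q n + q ^ n"
  using hsum_add[of p q 1 n] by simp

lemma hsum_Suc_Suc: "hsum p q (Suc (Suc n)) = (p + q) * hsum p q (Suc n) - p * q * hsum p q n"
  using hsum_Suc[of p q "Suc n"] hsum_Suc[of p q n] by (simp add: algebra_simps)

lemma hsum_Suc_add_mult:
  "hsum p q (Suc (a + b)) = hsum p q (Suc a) * hsum p q (Suc b) - p * q * hsum p q a * hsum p q b"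
  using hsum_add[of p q "Suc a" b] hsum_Suc[of p q a] hsum_Suc'[of p q b]
  by (simp add: algebra_simps)

lemma hsum_commute: "hsum p q n = hsum q p n"
proof -
  have "hsum q p n = (\<Sum>k<n. (\<lambda>j. p ^ j * q ^ (n - 1 - j)) (n - Suc k))"
    unfolding hsum_def by (rule sum.cong) (auto simp: Suc_diff_Suc)
  also have "\<dots> = hsum p q n"
    unfolding hsum_def by (rule sum.nat_diff_reindex)
  finally show ?thesis ..
qed

lemma hsum_pos:
  assumes "p > 0" "q > 0" "n \<ge> 1"
  shows "hsum p q n > 0"
  unfolding hsum_def using assms by (intro sum_pos) (auto simp: lessThan_empty_iff)

lemma hsum_Suc_le:
  assumes "p + q = 1" "p \<ge> 0" "q \<ge> 0" "n \<ge> 1"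
  shows "hsum p q (Suc n) \<le> hsum p q n"
proof -
  obtain m where m: "n = Suc m" using assms(4) by (cases n) auto
  have "p ^ 0 * q ^ (n - 1 - 0) \<le> hsum p q n"
    unfolding hsum_def using assms by (intro member_le_sum) auto
  then have "q ^ m \<le> hsum p q n"
    by (simp add: m)
  then have "q ^ n \<le> q * hsum p q n"
    unfolding m using assms(3) by (simp add: mult_left_mono)
  then have "hsum p q (Suc n) \<le> (p + q) * hsum p q n"
    by (simp add: hsum_Suc' algebra_simps)
  then show ?thesis using assms(1) by simp
qed

lemma hsum_le_powers:
  assumes "p \<ge> 0" "q \<ge> 0"
  shows "2 * hsum p q (Suc n) \<le> real (Suc n) * (p ^ n + q ^ n)"
proof -
  have "0 \<le> (\<Sum>k<Suc n. (p ^ k - q ^ k) * (p ^ (n - k) - q ^ (n - k)))"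
  proof (intro sum_nonneg)
    fix k
    show "0 \<le> (p ^ k - q ^ k) * (p ^ (n - k) - q ^ (n - k))"
    proof (cases "p \<le> q")
      case True
      then have "p ^ k \<le> q ^ k" "p ^ (n - k) \<le> q ^ (n - k)"
        using assms by (auto intro: power_mono)
      then show ?thesis by (simp add: mult_nonpos_nonpos)
    next
      case False
      then have "q ^ k \<le> p ^ k" "q ^ (n - k) \<le> p ^ (n - k)"
        using assms by (auto intro: power_mono)
      then show ?thesis by simp
    qed
  qed
  also have "\<dots> = (\<Sum>k<Suc n. (p ^ n + q ^ n) - p ^ k * q ^ (n - k) - q ^ k * p ^ (n - k))"
  proof (rule sum.cong [OF refl])
    fix k assume "k \<in> {..<Suc n}"
    then have "p ^ n = p ^ k * p ^ (n - k)" "q ^ n = q ^ k * q ^ (n - k)"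
      by (simp_all flip: power_add)
    then show "(p ^ k - q ^ k) * (p ^ (n - k) - q ^ (n - k))
        = (p ^ n + q ^ n) - p ^ k * q ^ (n - k) - q ^ k * p ^ (n - k)"
      by (simp add: algebra_simps)
  qed
  also have "\<dots> = real (Suc n) * (p ^ n + q ^ n) - hsum p q (Suc n) - hsum q p (Suc n)"
    by (simp add: sum_subtractf hsum_def)
  finally show ?thesis
    by (simp add: hsum_commute[of q p])
qed

lemma hsum_ratio:
  assumes "p + q = 1" "p \<ge> 0" "q \<ge> 0"
  shows "real (Suc n) * hsum p q n \<le> 2 * real n * hsum p q (Suc n)"
proof -
  have "2 * hsum p q (Suc n) = (p + q) * hsum p q n + (p ^ n + q ^ n)"
    using hsum_Suc[of p q n] hsum_Suc'[of p q n] by (simp add: algebra_simps)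
  then have pred: "hsum p q n = 2 * hsum p q (Suc n) - (p ^ n + q ^ n)"
    using assms(1) by simp
  have "real (Suc n) * hsum p q n
      = 2 * real n * hsum p q (Suc n) + (2 * hsum p q (Suc n) - real (Suc n) * (p ^ n + q ^ n))"
    unfolding pred by (simp add: algebra_simps)
  then show ?thesis
    using hsum_le_powers[OF assms(2,3), of n] by linarith
qed

definition green_num :: "real \<Rightarrow> real \<Rightarrow> nat \<Rightarrow> nat \<Rightarrow> nat \<Rightarrow> real" where
  "green_num p q N K I =
     (if K \<le> I then hsum p q K * hsum p q (N - I) * p ^ (I - K)
      else hsum p q I * hsum p q (N - K) * q ^ (K - I))"

lemma green_num_0 [simp]: "1 \<le> K \<Longrightarrow> green_num p q N K 0 = 0"
  by (simp add: green_num_def)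

lemma green_num_N [simp]: "K \<le> N \<Longrightarrow> green_num p q N K N = 0"
  by (simp add: green_num_def)

lemma green_num_below:
  assumes "p + q = 1" and "1 \<le> I" "I < K"
  shows "green_num p q N K I - p * green_num p q N K (I - 1) - q * green_num p q N K (I + 1) = 0"
proof -
  define m e where "m = I - 1" and "e = K - I - 1"
  then have m: "I = Suc m" and e: "K = Suc (Suc (m + e))"
    using assms(2,3) by auto
  have rec: "hsum p q (Suc (Suc m)) = hsum p q (Suc m) - p * q * hsum p q m"
    using hsum_Suc_Suc[of p q m] assms(1) by simp
  have "K - I = Suc e" "K - (I - 1) = Suc (Suc e)" "K - (I + 1) = e"
    using m e by auto
  then show ?thesis
    unfolding green_num_def using m e by (simp add: rec algebra_simps)
qed

lemma green_num_above:
  assumes "p + q = 1" and "K < I" "I < N"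
  shows "green_num p q N K I - p * green_num p q N K (I - 1) - q * green_num p q N K (I + 1) = 0"
proof -
  define m e where "m = N - I - 1" and "e = I - K - 1"
  then have m: "N - I = Suc m" and e: "I = Suc (K + e)"
    using assms(2,3) by auto
  have rec: "hsum p q (Suc (Suc m)) = hsum p q (Suc m) - p * q * hsum p q m"
    using hsum_Suc_Suc[of p q m] assms(1) by simp
  have "N - (I - 1) = Suc (Suc m)" "N - (I + 1) = m"
    using m e by auto
  then show ?thesis
    unfolding green_num_def using m e by (simp add: rec algebra_simps)
qed

lemma green_num_diagonal:
  assumes "p + q = 1" and "1 \<le> K" "K < N"
  shows "green_num p q N K K - p * green_num p q N K (K - 1) - q * green_num p q N K (K + 1)
    = hsum p q N"
proof -
  define a b where "a = K - 1" and "b = N - K - 1"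
  then have a: "K = Suc a" and b: "N - K = Suc b"
    using assms(2,3) by auto
  have N: "N = Suc (a + Suc b)"
    using a b by simp
  have rec: "hsum p q (Suc (Suc b)) = hsum p q (Suc b) - p * q * hsum p q b"
    using hsum_Suc_Suc[of p q b] assms(1) by simp
  have "hsum p q N = hsum p q (Suc a) * hsum p q (Suc b)
      - p * q * (hsum p q a * hsum p q (Suc b) + hsum p q (Suc a) * hsum p q b)"
    unfolding N hsum_Suc_add_mult by (simp add: rec algebra_simps)
  moreover have "N - (K + 1) = b"
    using b by simp
  ultimately show ?thesis
    unfolding green_num_def using a b by (simp add: algebra_simps)
qed

lemma green_num_harmonic:
  assumes "p + q = 1" and "1 \<le> K" "K < N" "1 \<le> I" "I < N"
  shows "green_num p q N K I - p * green_num p q N K (I - 1) - q * green_num p q N K (I + 1)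
    = (if K = I then hsum p q N else 0)"
  using green_num_below[OF assms(1,4)] green_num_above[OF assms(1) _ assms(5)]
    green_num_diagonal[OF assms(1-3)]
  by (cases K I rule: linorder_cases) auto

lemma logistic_add_reflect: "inverse (1 + exp (- x)) + inverse (1 + exp x) = (1 :: real)"
proof -
  have "0 < 1 + exp x"
    by (simp add: add_pos_pos)
  then show ?thesis
    by (simp add: exp_minus field_simps)
qed

definition p_up :: "real \<Rightarrow> real \<Rightarrow> real \<Rightarrow> real" where
  "p_up \<delta> \<beta> \<theta> = inverse (1 + exp (- (\<beta> * (\<theta> + \<delta>))))"

definition p_down :: "real \<Rightarrow> real \<Rightarrow> real \<Rightarrow> real" where
  "p_down \<delta> \<beta> \<theta> = inverse (1 + exp (\<beta> * (\<theta> + \<delta>)))"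

lemma p_up_add_p_down: "p_up \<delta> \<beta> \<theta> + p_down \<delta> \<beta> \<theta> = 1"
  unfolding p_up_def p_down_def by (rule logistic_add_reflect)

lemma p_up_pos: "p_up \<delta> \<beta> \<theta> > 0"
  by (simp add: p_up_def add_pos_pos)

lemma p_down_pos: "p_down \<delta> \<beta> \<theta> > 0"
  by (simp add: p_down_def add_pos_pos)

definition jump_rate :: "nat \<Rightarrow> nat \<Rightarrow> real" where
  "jump_rate N J = real (J * (N - J)) / (real N)\<^sup>2"

lemma jump_rate_pos: "1 \<le> J \<Longrightarrow> J < N \<Longrightarrow> jump_rate N J > 0"
  by (simp add: jump_rate_def)

definition tridiag :: "real \<Rightarrow> real \<Rightarrow> nat \<Rightarrow> nat \<Rightarrow> real" where
  "tridiag p q J I = (if I = J + 1 then - p else if I + 1 = J then - q else if I = J then 1 else 0)"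

lemma one_minus_u_ent_eq_tridiag:
  "(if J = I then 1 else 0) - u_ent N \<delta> \<beta> \<theta> J I
    = jump_rate N J * tridiag (p_up \<delta> \<beta> \<theta>) (p_down \<delta> \<beta> \<theta>) J I"
proof -
  have "jump_rate N J * p_up \<delta> \<beta> \<theta> + jump_rate N J * p_down \<delta> \<beta> \<theta> = jump_rate N J"
    using p_up_add_p_down by (simp flip: distrib_left)
  then show ?thesis
    unfolding u_ent_def Let_def tridiag_def jump_rate_def p_up_def p_down_def by auto
qed

lemma tridiag_column_sum:
  assumes "g 0 = 0" "g (Suc M) = 0" "i < M"
  shows "(\<Sum>j<M. g (Suc j) * tridiag p q (Suc j) (Suc i))
    = g (Suc i) - p * g i - q * g (Suc (Suc i))"
proof -
  have "g (Suc j) * tridiag p q (Suc j) (Suc i)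
      = (if j = i then g (Suc i) else 0) - (if Suc j = i then p * g i else 0)
        - (if j = Suc i then q * g (Suc (Suc i)) else 0)" for j
    unfolding tridiag_def by auto
  then have "(\<Sum>j<M. g (Suc j) * tridiag p q (Suc j) (Suc i))
      = (\<Sum>j<M. if j = i then g (Suc i) else 0) - (\<Sum>j<M. if Suc j = i then p * g i else 0)
        - (\<Sum>j<M. if j = Suc i then q * g (Suc (Suc i)) else 0)"
    by (simp add: sum_subtractf)
  also have "(\<Sum>j<M. if Suc j = i then p * g i else 0) = p * g i"
    using assms(1,3) by (cases i) (simp_all add: sum.delta)
  also have "(\<Sum>j<M. if j = Suc i then q * g (Suc (Suc i)) else 0) = q * g (Suc (Suc i))"
    using assms(2,3) by (cases "Suc i = M") (simp_all add: sum.delta)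
  finally show ?thesis
    using assms(3) by (simp add: sum.delta)
qed

lemma the_mat_inverse_eqI:
  fixes A X :: "'a :: field mat"
  assumes A: "A \<in> carrier_mat n n" and X: "X \<in> carrier_mat n n" and XA: "X * A = 1\<^sub>m n"
  shows "the (mat_inverse A) = X"
proof (cases "mat_inverse A")
  case None
  have "A * X = 1\<^sub>m n"
    by (rule mat_mult_left_right_inverse[OF X A XA])
  then have "A \<in> Units (ring_mat TYPE('a) n ())"
    using A X XA unfolding Units_def ring_mat_def by auto
  with mat_inverse(1)[OF A None, of "()"] show ?thesis
    by blast
next
  case (Some B)
  with mat_inverse(2)[OF A] have AB: "A * B = 1\<^sub>m n" and B: "B \<in> carrier_mat n n"
    by auto
  have "X = (X * A) * B"
    using A B X by (simp add: AB assoc_mult_mat[of X n n A n B n])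
  also have "\<dots> = B"
    using B by (simp add: XA)
  finally show ?thesis
    by (simp add: Some)
qed

definition green_mat :: "nat \<Rightarrow> real \<Rightarrow> real \<Rightarrow> real mat" where
  "green_mat N p q = mat (N - 1) (N - 1)
     (\<lambda>(k, i). green_num p q N (Suc k) (Suc i) / (hsum p q N * jump_rate N (Suc i)))"

lemma green_mat_left_inverse:
  fixes \<delta> \<beta> \<theta> :: real
  defines "p \<equiv> p_up \<delta> \<beta> \<theta>" and "q \<equiv> p_down \<delta> \<beta> \<theta>"
  shows "green_mat N p q * (1\<^sub>m (N - 1) - U_mat N \<delta> \<beta> \<theta>) = 1\<^sub>m (N - 1)"
proof (rule eq_matI)
  fix k i
  assume "k < dim_row (1\<^sub>m (N - 1) :: real mat)" "i < dim_col (1\<^sub>m (N - 1) :: real mat)"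
  then have k: "k < N - 1" and i: "i < N - 1"
    by auto
  have pq: "p + q = 1"
    unfolding p_def q_def by (rule p_up_add_p_down)
  have DN: "hsum p q N > 0"
    using i unfolding p_def q_def by (intro hsum_pos p_up_pos p_down_pos) auto
  let ?g = "green_num p q N (Suc k)"
  have "(green_mat N p q * (1\<^sub>m (N - 1) - U_mat N \<delta> \<beta> \<theta>)) $$ (k, i)
      = (\<Sum>j<N - 1. ?g (Suc j) / (hsum p q N * jump_rate N (Suc j))
           * ((if Suc j = Suc i then 1 else 0) - u_ent N \<delta> \<beta> \<theta> (Suc j) (Suc i)))"
    using k i unfolding green_mat_def U_mat_def
    by (simp add: scalar_prod_def atLeast0LessThan)
  also have "\<dots> = (\<Sum>j<N - 1. ?g (Suc j) * tridiag p q (Suc j) (Suc i)) / hsum p q N"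
    unfolding one_minus_u_ent_eq_tridiag sum_divide_distrib p_def q_def
    by (intro sum.cong refl) (use jump_rate_pos in force)
  also have "\<dots> = (?g (Suc i) - p * ?g i - q * ?g (Suc (Suc i))) / hsum p q N"
    using k i by (subst tridiag_column_sum) auto
  also have "\<dots> = (if Suc k = Suc i then 1 else 0)"
    using green_num_harmonic[OF pq, of "Suc k" N "Suc i"] k i DN by auto
  finally show "(green_mat N p q * (1\<^sub>m (N - 1) - U_mat N \<delta> \<beta> \<theta>)) $$ (k, i)
      = 1\<^sub>m (N - 1) $$ (k, i)"
    using k i by simp
qed (simp_all add: green_mat_def U_mat_def)

lemma fund_mat_eq_green_mat:
  "fund_mat N \<delta> \<beta> \<theta> = green_mat N (p_up \<delta> \<beta> \<theta>) (p_down \<delta> \<beta> \<theta>)"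
  unfolding fund_mat_def
proof (rule the_mat_inverse_eqI[where n = "N - 1"])
  show "1\<^sub>m (N - 1) - U_mat N \<delta> \<beta> \<theta> \<in> carrier_mat (N - 1) (N - 1)"
    unfolding U_mat_def by (intro minus_carrier_mat) auto
  show "green_mat N (p_up \<delta> \<beta> \<theta>) (p_down \<delta> \<beta> \<theta>) \<in> carrier_mat (N - 1) (N - 1)"
    by (simp add: green_mat_def)
qed (rule green_mat_left_inverse)

lemma n_ent_eq_green_num:
  assumes "1 \<le> K" "K < N" "1 \<le> i" "i < N"
  shows "n_ent N \<delta> \<beta> \<theta> K i = green_num (p_up \<delta> \<beta> \<theta>) (p_down \<delta> \<beta> \<theta>) N K i
    / (hsum (p_up \<delta> \<beta> \<theta>) (p_down \<delta> \<beta> \<theta>) N * jump_rate N i)"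
  using assms by (simp add: n_ent_def fund_mat_eq_green_mat green_mat_def)

lemma green_num_boundary_sum:
  assumes "1 \<le> i" "i < N"
  shows "green_num p q N 1 i + green_num p q N (N - 1) i
    = hsum p q (N - 1) + p ^ (i - 1) * q ^ (N - 1 - i)"
proof -
  define m r where "m = i - 1" and "r = N - i - 1"
  then have i: "i = Suc m" and N: "N = Suc (m + Suc r)"
    using assms by auto
  have "green_num p q N (N - 1) i = hsum p q (Suc m) * q ^ r"
    unfolding green_num_def using i N by (cases r) auto
  then have "green_num p q N 1 i + green_num p q N (N - 1) i
      = hsum p q (Suc r) * p ^ m + (q * hsum p q m + p ^ m) * q ^ r"
    unfolding green_num_def using i N by (simp add: hsum_Suc)
  also have "\<dots> = hsum p q (m + Suc r) + p ^ m * q ^ r"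
    unfolding hsum_add by (simp add: algebra_simps)
  finally show ?thesis
    using i N by simp
qed

lemma n_ent_boundary_sum:
  fixes \<delta> \<beta> \<theta> :: real
  assumes "1 \<le> i" "i < N"
  defines "p \<equiv> p_up \<delta> \<beta> \<theta>" and "q \<equiv> p_down \<delta> \<beta> \<theta>"
  shows "n_ent N \<delta> \<beta> \<theta> 1 i + n_ent N \<delta> \<beta> \<theta> (N - 1) i
    = real N ^ 2 * (hsum p q (N - 1) + p ^ (i - 1) * q ^ (N - 1 - i))
      / (hsum p q N * (real i * (real N - real i)))"
proof -
  have "n_ent N \<delta> \<beta> \<theta> 1 i + n_ent N \<delta> \<beta> \<theta> (N - 1) i
      = (green_num p q N 1 i + green_num p q N (N - 1) i) / (hsum p q N * jump_rate N i)"
    unfolding p_def q_def using assms(1,2) by (simp add: n_ent_eq_green_num add_divide_distrib)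
  moreover have "jump_rate N i = real i * (real N - real i) / real N ^ 2"
    unfolding jump_rate_def using assms(2) by (simp add: of_nat_diff)
  ultimately show ?thesis
    unfolding green_num_boundary_sum[OF assms(1,2)] by simp
qed

lemma sum_monomials_eq_hsum:
  "(\<Sum>i = 1..n. p ^ (i - 1) * q ^ (n - i)) = hsum p q n"
  using sum.atLeast1_atMost_eq[of "\<lambda>i. p ^ (i - 1) * q ^ (n - i)" n] by (simp add: hsum_def)

lemma sum_inverse_complement_eq_H: "(\<Sum>i = 1..N - 1. 1 / (real N - real i)) = H N"
proof -
  have "H N = (\<Sum>i = 1..N - 1. 1 / real (N - 1 + 1 - i))"
    unfolding H_def by (rule sum.atLeastAtMost_rev)
  also have "\<dots> = (\<Sum>i = 1..N - 1. 1 / (real N - real i))"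
    by (rule sum.cong) (auto simp: of_nat_diff)
  finally show ?thesis ..
qed

lemma weighted_sum_bounds:
  fixes t w :: "'a \<Rightarrow> real"
  assumes "\<And>i. i \<in> A \<Longrightarrow> 0 \<le> t i \<and> a \<le> w i \<and> w i \<le> 1" and "sum t A = K"
  shows "K * (sum w A + a) \<le> (\<Sum>i\<in>A. (K + t i) * w i)"
    and "(\<Sum>i\<in>A. (K + t i) * w i) \<le> K * (sum w A + 1)"
proof -
  have split: "(\<Sum>i\<in>A. (K + t i) * w i) = K * sum w A + (\<Sum>i\<in>A. t i * w i)"
    by (simp add: distrib_right sum.distrib sum_distrib_left)
  have "K * a = (\<Sum>i\<in>A. t i * a)"
    unfolding assms(2)[symmetric] by (rule sum_distrib_right)
  also have "\<dots> \<le> (\<Sum>i\<in>A. t i * w i)"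
    using assms(1) by (intro sum_mono mult_left_mono) auto
  finally show "K * (sum w A + a) \<le> (\<Sum>i\<in>A. (K + t i) * w i)"
    unfolding split by (simp add: algebra_simps)
  have "(\<Sum>i\<in>A. t i * w i) \<le> sum t A"
    using assms(1) by (intro sum_mono) (auto intro: mult_left_le)
  then show "(\<Sum>i\<in>A. (K + t i) * w i) \<le> K * (sum w A + 1)"
    unfolding split using assms(2) by (simp add: algebra_simps)
qed

lemma E_r_eq:
  fixes \<delta> \<beta> \<theta> :: real
  defines "p \<equiv> p_up \<delta> \<beta> \<theta>" and "q \<equiv> p_down \<delta> \<beta> \<theta>"
  assumes "N \<ge> 2"
  shows "E_r N \<delta> \<beta> \<theta> = \<theta> * real N ^ 2 / (2 * hsum p q N)
    * (\<Sum>i = 1..N - 1. (hsum p q (N - 1) + p ^ (i - 1) * q ^ (N - 1 - i)) * (1 / (real N - real i)))"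
proof -
  have "hsum p q N > 0"
    unfolding p_def q_def using assms(3) by (intro hsum_pos p_up_pos p_down_pos) auto
  then show ?thesis
    unfolding E_r_def sum_distrib_left
  proof (intro sum.cong refl)
    fix i assume "i \<in> {1..N - 1}"
    then have i: "1 \<le> i" "i < N"
      by auto
    with \<open>hsum p q N > 0\<close>
    show "\<theta> / 2 * ((n_ent N \<delta> \<beta> \<theta> 1 i + n_ent N \<delta> \<beta> \<theta> (N - 1) i) * real i)
        = \<theta> * real N ^ 2 / (2 * hsum p q N)
          * ((hsum p q (N - 1) + p ^ (i - 1) * q ^ (N - 1 - i)) * (1 / (real N - real i)))"
      unfolding n_ent_boundary_sum[OF i] by (simp add: p_def q_def field_simps)
  qed
qed

lemma E_p_eq:
  fixes \<delta> \<beta> \<theta> :: real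
  defines "p \<equiv> p_up \<delta> \<beta> \<theta>" and "q \<equiv> p_down \<delta> \<beta> \<theta>"
  assumes "N \<ge> 2"
  shows "E_p N \<delta> \<beta> \<theta> = \<theta> * real N ^ 2 / (2 * hsum p q N)
    * (\<Sum>i = 1..N - 1. (hsum p q (N - 1) + p ^ (i - 1) * q ^ (N - 1 - i)) * (1 / real i))"
proof -
  have "hsum p q N > 0"
    unfolding p_def q_def using assms(3) by (intro hsum_pos p_up_pos p_down_pos) auto
  then show ?thesis
    unfolding E_p_def sum_distrib_left
  proof (intro sum.cong refl)
    fix i assume "i \<in> {1..N - 1}"
    then have i: "1 \<le> i" "i < N"
      by auto
    with \<open>hsum p q N > 0\<close>
    show "\<theta> / 2 * ((n_ent N \<delta> \<beta> \<theta> 1 i + n_ent N \<delta> \<beta> \<theta> (N - 1) i) * (real N - real i))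
        = \<theta> * real N ^ 2 / (2 * hsum p q N)
          * ((hsum p q (N - 1) + p ^ (i - 1) * q ^ (N - 1 - i)) * (1 / real i))"
      unfolding n_ent_boundary_sum[OF i] by (simp add: p_def q_def field_simps)
  qed
qed

lemma boundary_weighted_sum_bounds:
  fixes w :: "nat \<Rightarrow> real"
  assumes "p \<ge> 0" "q \<ge> 0"
    and w: "\<And>i. i \<in> {1..N - 1} \<Longrightarrow> 1 / (real N - 1) \<le> w i \<and> w i \<le> 1"
  defines "S \<equiv> (\<Sum>i = 1..N - 1. (hsum p q (N - 1) + p ^ (i - 1) * q ^ (N - 1 - i)) * w i)"
  shows "hsum p q (N - 1) * (sum w {1..N - 1} + 1 / (real N - 1)) \<le> S"
    and "S \<le> hsum p q (N - 1) * (sum w {1..N - 1} + 1)"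
proof -
  have t: "0 \<le> p ^ (i - 1) * q ^ (N - 1 - i) \<and> 1 / (real N - 1) \<le> w i \<and> w i \<le> 1"
    if "i \<in> {1..N - 1}" for i
    using w[OF that] assms(1,2) by simp
  have sum_t: "(\<Sum>i = 1..N - 1. p ^ (i - 1) * q ^ (N - 1 - i)) = hsum p q (N - 1)"
    using sum_monomials_eq_hsum[of p q "N - 1"] by simp
  show "hsum p q (N - 1) * (sum w {1..N - 1} + 1 / (real N - 1)) \<le> S"
    unfolding S_def by (rule weighted_sum_bounds(1)[OF t sum_t])
  show "S \<le> hsum p q (N - 1) * (sum w {1..N - 1} + 1)"
    unfolding S_def by (rule weighted_sum_bounds(2)[OF t sum_t])
qed

lemma boundary_time_bounds:
  fixes w :: "nat \<Rightarrow> real"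
  assumes pq: "p + q = 1" "p > 0" "q > 0" and N: "N \<ge> 2" and "\<theta> \<ge> 0"
    and w: "\<And>i. i \<in> {1..N - 1} \<Longrightarrow> 1 / (real N - 1) \<le> w i \<and> w i \<le> 1"
  defines "S \<equiv> (\<Sum>i = 1..N - 1. (hsum p q (N - 1) + p ^ (i - 1) * q ^ (N - 1 - i)) * w i)"
    and "W \<equiv> sum w {1..N - 1}"
  shows "real N ^ 2 * \<theta> / 2 * (W + 1 / (real N - 1)) \<le> \<theta> * real N ^ 2 / (2 * hsum p q N) * S"
    and "\<theta> * real N ^ 2 / (2 * hsum p q N) * S \<le> real N * (real N - 1) * \<theta> * (W + 1)"
proof -
  let ?K = "hsum p q (N - 1)" and ?D = "hsum p q N" and ?c = "\<theta> * real N ^ 2 / (2 * hsum p q N)"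
  note S_bounds = boundary_weighted_sum_bounds[of p q N w, folded S_def W_def]
  have N': "N = Suc (N - 1)" "N - 1 \<ge> 1"
    using N by auto
  have D: "?D > 0"
    using N pq by (intro hsum_pos) auto
  have DK: "?D \<le> ?K"
    using hsum_Suc_le[OF pq(1) _ _ N'(2)] pq N'(1) by (metis less_imp_le)
  have ratio: "real N * ?K \<le> 2 * (real N - 1) * ?D"
    using hsum_ratio[OF pq(1), of "N - 1"] pq N'(1) by (simp add: of_nat_diff)
  have c: "?c \<ge> 0"
    using D assms(5) by simp
  have a: "0 < 1 / (real N - 1)"
    using N by simp
  have "W \<ge> 0"
    unfolding W_def using w a by (intro sum_nonneg) (meson less_le_trans less_imp_le)
  then have W1: "W + 1 / (real N - 1) \<ge> 0" and W2: "W + 1 \<ge> 0"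
    using a by auto
  have "real N ^ 2 * \<theta> / 2 * (W + 1 / (real N - 1)) = ?c * (?D * (W + 1 / (real N - 1)))"
    using D by (simp add: field_simps)
  also have "\<dots> \<le> ?c * (?K * (W + 1 / (real N - 1)))"
    using c DK W1 by (intro mult_left_mono mult_right_mono)
  also have "\<dots> \<le> ?c * S"
    using c S_bounds(1) w pq by (intro mult_left_mono) auto
  finally show "real N ^ 2 * \<theta> / 2 * (W + 1 / (real N - 1)) \<le> ?c * S" .
  have "?c * S \<le> ?c * (?K * (W + 1))"
    using c S_bounds(2) w pq by (intro mult_left_mono) auto
  also have "\<dots> = \<theta> * real N * (W + 1) / (2 * ?D) * (real N * ?K)"
    by (simp add: power2_eq_square)
  also have "\<dots> \<le> \<theta> * real N * (W + 1) / (2 * ?D) * (2 * (real N - 1) * ?D)"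
    using ratio D assms(5) W2 by (intro mult_left_mono) auto
  also have "\<dots> = real N * (real N - 1) * \<theta> * (W + 1)"
    using D by (simp add: field_simps)
  finally show "?c * S \<le> real N * (real N - 1) * \<theta> * (W + 1)" .
qed

theorem theorem1:
  fixes N :: nat and \<delta> \<beta> \<theta> :: real
  assumes "N \<ge> 2" and "\<delta> < 0" and "\<beta> > 0" and "\<theta> \<ge> 0"
  shows "\<forall>E \<in> {E_r N \<delta> \<beta> \<theta>, E_p N \<delta> \<beta> \<theta>}.
           real N ^ 2 * \<theta> / 2 * (H N + 1 / (real N - 1)) \<le> E
         \<and> E \<le> real N * (real N - 1) * \<theta> * (H N + 1)"
proof -
  note pq = p_up_add_p_down p_up_pos p_down_pos
  have w_r: "1 / (real N - 1) \<le> 1 / (real N - real i) \<and> 1 / (real N - real i) \<le> 1"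
    and w_p: "1 / (real N - 1) \<le> 1 / real i \<and> 1 / real i \<le> 1" if "i \<in> {1..N - 1}" for i
    using that assms(1) by (auto simp: frac_le)
  have "real N ^ 2 * \<theta> / 2 * (H N + 1 / (real N - 1)) \<le> E_r N \<delta> \<beta> \<theta>
      \<and> E_r N \<delta> \<beta> \<theta> \<le> real N * (real N - 1) * \<theta> * (H N + 1)"
    unfolding E_r_eq[OF assms(1)] sum_inverse_complement_eq_H[symmetric]
    using boundary_time_bounds[where w = "\<lambda>i. 1 / (real N - real i)", OF pq assms(1,4)] w_r
    by blast
  moreover have "real N ^ 2 * \<theta> / 2 * (H N + 1 / (real N - 1)) \<le> E_p N \<delta> \<beta> \<theta>
      \<and> E_p N \<delta> \<beta> \<theta> \<le> real N * (real N - 1) * \<theta> * (H N + 1)"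
    unfolding E_p_eq[OF assms(1)] H_def
    using boundary_time_bounds[where w = "\<lambda>i. 1 / real i", OF pq assms(1,4)] w_p
    by blast
  ultimately show ?thesis
    by simp
qed

end
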